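(* For $n\geq 1$ and $m\geq 1$, the forcing spectrum $\mathrm{Spec}(C(2m-1,2n+1))$ is an integer interval (i.e. it is continuous).
   Context: $C(k,n)$ denotes the graph with vertices $(a,b)$, $a\in\mathbb{Z}_n$, $0\le b\le k$, and edges $(a,b)(a+1,b)$ and $(a,b)(a,b+1)$ (the grid graph of a quadriculated cylinder with $k$ rows of $n$ squares). For a perfect matching $M$ of a graph $G$, a subset $S\subseteq M$ is a forcing set of $M$ if no other perfect matching of $G$ contains $S$; the forcing number $f(G,M)$ is the minimum size of a forcing set. The forcing spectrum $\mathrm{Spec}(G)$ is the set of forcing numbers of all perfect matchings of $G$; it is continuous if it is a set of consecutive integers. *)

theory Defs
  imports Main
begin

definition perfect_matching :: "'v set \<Rightarrow> 'v set set \<Rightarrow> 'v set set \<Rightarrow> bool" where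
  "perfect_matching V E M \<longleftrightarrow> M \<subseteq> E \<and> (\<forall>v\<in>V. \<exists>!e. e \<in> M \<and> v \<in> e)"

definition forcing_set :: "'v set \<Rightarrow> 'v set set \<Rightarrow> 'v set set \<Rightarrow> 'v set set \<Rightarrow> bool" where
  "forcing_set V E M S \<longleftrightarrow> S \<subseteq> M \<and>
     (\<forall>M'. perfect_matching V E M' \<and> S \<subseteq> M' \<longrightarrow> M' = M)"

definition forcing_number :: "'v set \<Rightarrow> 'v set set \<Rightarrow> 'v set set \<Rightarrow> nat" where
  "forcing_number V E M = (LEAST k. \<exists>S. forcing_set V E M S \<and> finite S \<and> card S = k)"

definition forcing_spectrum :: "'v set \<Rightarrow> 'v set set \<Rightarrow> nat set" where
  "forcing_spectrum V E = {forcing_number V E M | M. perfect_matching V E M}"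

definition continuous_spectrum :: "nat set \<Rightarrow> bool" where
  "continuous_spectrum A \<longleftrightarrow> (\<forall>i\<in>A. \<forall>j\<in>A. \<forall>x. i \<le> x \<and> x \<le> j \<longrightarrow> x \<in> A)"

text \<open>The cylinder grid C(k,n): vertices (a,b), a in Z_n (represented by 0..n-1), 0 <= b <= k.\<close>

definition cyl_verts :: "nat \<Rightarrow> nat \<Rightarrow> (nat \<times> nat) set" where
  "cyl_verts k n = {(a, b). a < n \<and> b \<le> k}"

definition cyl_edges :: "nat \<Rightarrow> nat \<Rightarrow> (nat \<times> nat) set set" where
  "cyl_edges k n =
     {{(a, b), ((a + 1) mod n, b)} | a b. a < n \<and> b \<le> k} \<union>
     {{(a, b), (a, b + 1)} | a b. a < n \<and> b < k}"

end

theory Submission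
  imports Defs
begin

text \<open>
  A perfect matching M of C(k, N) is recorded by its height
  H(c, b) = \<Sum>i\<le>b. (-1)^i [(c, i)(c+1, i) \<in> M]. The vertex conditions give
  H(c, b) + H(c+1, b) = [b even] - (-1)^b [(c+1, b)(c+1, b+1) \<in> M], and for odd k and odd N
  this forces H(c, k) = 0. If the potential \<Sum>|H(c, b)| is positive, a suitably chosen face
  extremal for H carries two parallel matching edges; rotating them lowers the potential, and such a
  rotation of an M-alternating 4-cycle changes the forcing number by at most one. The only matching
  of potential 0 consists of the vertical edges in the even rows, so every forcing number is joined
  to the forcing number of that matching by steps of size at most one.
\<close>

definition alternating_square ::
    "'v set set \<Rightarrow> 'v set set \<Rightarrow> 'v \<Rightarrow> 'v \<Rightarrow> 'v \<Rightarrow> 'v \<Rightarrow> bool" where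
  "alternating_square E M p q r s \<longleftrightarrow>
     distinct [p, q, r, s] \<and> {p, q} \<in> M \<and> {r, s} \<in> M \<and> {q, r} \<in> E \<and> {s, p} \<in> E"

definition twist :: "'v \<Rightarrow> 'v \<Rightarrow> 'v \<Rightarrow> 'v \<Rightarrow> 'v set set \<Rightarrow> 'v set set" where
  "twist p q r s M = M - {{p, q}, {r, s}} \<union> {{q, r}, {s, p}}"

lemma twist_swap_pairs: "twist r s p q M = twist p q r s M"
  unfolding twist_def by (simp add: insert_commute)

lemma forcing_spectrum_eq_image:
  "forcing_spectrum V E = forcing_number V E ` {M. perfect_matching V E M}"
  unfolding forcing_spectrum_def by blast

lemma forcing_number_le:
  "forcing_set V E M S \<Longrightarrow> finite S \<Longrightarrow> forcing_number V E M \<le> card S"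
  unfolding forcing_number_def by (intro Least_le) blast

locale finite_graph =
  fixes V :: "'v set" and E :: "'v set set"
  assumes finite_edges: "finite E"
    and edge_subset: "e \<in> E \<Longrightarrow> e \<subseteq> V"
    and edge_nonempty: "e \<in> E \<Longrightarrow> e \<noteq> {}"
begin

lemma perfect_matching_subset: "perfect_matching V E M \<Longrightarrow> M \<subseteq> E"
  unfolding perfect_matching_def by blast

lemma perfect_matching_cover:
  "perfect_matching V E M \<Longrightarrow> v \<in> V \<Longrightarrow> \<exists>e\<in>M. v \<in> e"
  unfolding perfect_matching_def by blast

lemma perfect_matching_unique:
  "perfect_matching V E M \<Longrightarrow> e \<in> M \<Longrightarrow> e' \<in> M \<Longrightarrow> v \<in> e \<Longrightarrow> v \<in> e' \<Longrightarrow> e = e'"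
  using edge_subset unfolding perfect_matching_def by blast

lemma perfect_matching_subset_eq:
  assumes "perfect_matching V E M" "perfect_matching V E M'" "M \<subseteq> M'"
  shows "M' = M"
proof (intro equalityI subsetI)
  fix e assume "e \<in> M'"
  then obtain v where "v \<in> e" "v \<in> V"
    using perfect_matching_subset[OF assms(2)] edge_subset edge_nonempty by blast
  then obtain e' where "e' \<in> M" "v \<in> e'"
    using perfect_matching_cover[OF assms(1)] by blast
  then show "e \<in> M"
    using perfect_matching_unique[OF assms(2) \<open>e \<in> M'\<close>] \<open>v \<in> e\<close> assms(3) by blast
qed (use assms(3) in blast)

lemma forcing_number_attained:
  assumes "perfect_matching V E M"
  shows "\<exists>S. forcing_set V E M S \<and> finite S \<and> card S = forcing_number V E M"
proof -
  have "forcing_set V E M M"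
    unfolding forcing_set_def using perfect_matching_subset_eq[OF assms] by blast
  moreover have "finite M"
    using perfect_matching_subset[OF assms] finite_edges by (rule finite_subset)
  ultimately have "\<exists>k S. forcing_set V E M S \<and> finite S \<and> card S = k"
    by blast
  then show ?thesis
    unfolding forcing_number_def by (rule LeastI_ex)
qed

context
  fixes M p q r s
  assumes pm: "perfect_matching V E M" and square: "alternating_square E M p q r s"
begin

lemma twist_new_edges_notin: "{q, r} \<notin> M" "{s, p} \<notin> M"
proof -
  have "{p, q} \<in> M" "distinct [p, q, r, s]"
    using square unfolding alternating_square_def by auto
  then show "{q, r} \<notin> M" "{s, p} \<notin> M"
    using perfect_matching_unique[OF pm, of "{p, q}"] by (auto simp: doubleton_eq_iff)
qed

lemma twist_unique_at_square:
  assumes "v \<in> {p, q, r, s}"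
  shows "\<exists>!e. e \<in> twist p q r s M \<and> v \<in> e"
proof -
  have "v \<in> {p, q} \<or> v \<in> {r, s}"
    using assms by auto
  then have old: "e \<notin> M - {{p, q}, {r, s}}" if "v \<in> e" for e
    using that square perfect_matching_unique[OF pm, of e "{p, q}" v]
      perfect_matching_unique[OF pm, of e "{r, s}" v]
    unfolding alternating_square_def by blast
  have new: "v \<in> {q, r} \<longleftrightarrow> v \<notin> {s, p}"
    using assms square unfolding alternating_square_def by auto
  obtain f where f: "f \<in> {{q, r}, {s, p}}" "v \<in> f"
    using assms by auto
  show ?thesis
  proof (rule ex1I[of _ f])
    show "f \<in> twist p q r s M \<and> v \<in> f"
      using f unfolding twist_def by blast
  next
    fix e assume "e \<in> twist p q r s M \<and> v \<in> e"
    then show "e = f"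
      using old new f unfolding twist_def by auto
  qed
qed

lemma perfect_matching_twist: "perfect_matching V E (twist p q r s M)"
  unfolding perfect_matching_def
proof (intro conjI ballI)
  show "twist p q r s M \<subseteq> E"
    using perfect_matching_subset[OF pm] square
    unfolding twist_def alternating_square_def by blast
next
  fix v assume "v \<in> V"
  show "\<exists>!e. e \<in> twist p q r s M \<and> v \<in> e"
  proof (cases "v \<in> {p, q, r, s}")
    case True
    then show ?thesis
      by (rule twist_unique_at_square)
  next
    case False
    then obtain e where e: "e \<in> M" "v \<in> e"
      using perfect_matching_cover[OF pm \<open>v \<in> V\<close>] by blast
    show ?thesis
    proof (rule ex1I[of _ e])
      show "e \<in> twist p q r s M \<and> v \<in> e"
        using e False unfolding twist_def by auto
    next
      fix e' assume "e' \<in> twist p q r s M \<and> v \<in> e'"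
      with False have "e' \<in> M" "v \<in> e'"
        unfolding twist_def by auto
      then show "e' = e"
        using perfect_matching_unique[OF pm _ e(1) _ e(2)] by blast
    qed
  qed
qed

lemma alternating_square_twist: "alternating_square E (twist p q r s M) q r s p"
  using square perfect_matching_subset[OF pm]
  unfolding alternating_square_def twist_def by auto

lemma twist_twist: "twist q r s p (twist p q r s M) = M"
  using square twist_new_edges_notin
  unfolding twist_def alternating_square_def by (auto simp: insert_commute)

lemma forcing_set_meets_square:
  assumes "forcing_set V E M S"
  shows "{p, q} \<in> S \<or> {r, s} \<in> S"
proof (rule ccontr)
  assume "\<not> ?thesis"
  then have "S \<subseteq> twist p q r s M"
    using assms unfolding forcing_set_def twist_def by blast
  then have "twist p q r s M = M"
    using assms perfect_matching_twist unfolding forcing_set_def by blast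
  then show False
    using twist_new_edges_notin unfolding twist_def by blast
qed

end

lemma forcing_set_twist:
  assumes pm: "perfect_matching V E M" and square: "alternating_square E M p q r s"
    and S: "forcing_set V E M S"
  shows "forcing_set V E (twist p q r s M) (twist p q r s S)"
  unfolding forcing_set_def
proof (intro conjI allI impI)
  show "twist p q r s S \<subseteq> twist p q r s M"
    using S unfolding forcing_set_def twist_def by blast
next
  fix M' assume M': "perfect_matching V E M' \<and> twist p q r s S \<subseteq> M'"
  then have square': "alternating_square E M' q r s p"
    using square perfect_matching_subset[OF pm]
    unfolding alternating_square_def twist_def by auto
  have "S \<subseteq> twist q r s p M'"
    using M' S twist_new_edges_notin[OF pm square] unfolding forcing_set_def twist_def by auto
  then have "twist q r s p M' = M"
    using S perfect_matching_twist[OF _ square'] M' unfolding forcing_set_def by blast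
  then show "M' = twist p q r s M"
    using twist_twist[OF _ square'] M' by (simp add: twist_swap_pairs)
qed

lemma forcing_number_twist_le:
  assumes pm: "perfect_matching V E M" and square: "alternating_square E M p q r s"
  shows "forcing_number V E (twist p q r s M) \<le> forcing_number V E M + 1"
proof -
  obtain S where S: "forcing_set V E M S" "finite S" "card S = forcing_number V E M"
    using forcing_number_attained[OF pm] by blast
  obtain e where e: "e \<in> S" "e \<in> {{p, q}, {r, s}}"
    using forcing_set_meets_square[OF pm square S(1)] by blast
  have "card (twist p q r s S) \<le> card (S - {{p, q}, {r, s}}) + card {{q, r}, {s, p}}"
    unfolding twist_def by (rule card_Un_le)
  also have "\<dots> \<le> card (S - {e}) + 2"
    using S(2) e by (intro add_mono card_mono) (auto simp: card_insert_if)
  also have "\<dots> = card S + 1"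
    using S(2) e(1) card_gt_0_iff[of S] by (auto simp: card_Diff_singleton)
  finally have "card (twist p q r s S) \<le> card S + 1" .
  moreover have "finite (twist p q r s S)"
    using S(2) unfolding twist_def by simp
  ultimately show ?thesis
    using forcing_number_le[OF forcing_set_twist[OF pm square S(1)]] S(3) by simp
qed

theorem forcing_number_twist:
  assumes "perfect_matching V E M" "alternating_square E M p q r s"
  shows "forcing_number V E (twist p q r s M) \<le> forcing_number V E M + 1"
    and "forcing_number V E M \<le> forcing_number V E (twist p q r s M) + 1"
  using forcing_number_twist_le[OF assms]
    forcing_number_twist_le[OF perfect_matching_twist[OF assms] alternating_square_twist[OF assms]]
  by (simp_all add: twist_twist[OF assms])

end

lemma continuous_spectrum_by_descent:
  fixes f P :: "'a \<Rightarrow> nat"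
  assumes descent: "\<And>x. x \<in> A \<Longrightarrow> P x \<noteq> 0 \<Longrightarrow>
      \<exists>y\<in>A. P y < P x \<and> f y \<le> f x + 1 \<and> f x \<le> f y + 1"
    and bottom: "\<And>x y. x \<in> A \<Longrightarrow> y \<in> A \<Longrightarrow> P x = 0 \<Longrightarrow> P y = 0 \<Longrightarrow> f x = f y"
  shows "continuous_spectrum (f ` A)"
proof -
  have reach: "\<exists>z\<in>A. P z = 0 \<and> {min (f x) (f z)..max (f x) (f z)} \<subseteq> f ` A"
    if "x \<in> A" for x
    using that
  proof (induction "P x" arbitrary: x rule: less_induct)
    case less
    show ?case
    proof (cases "P x = 0")
      case True
      with less.prems show ?thesis by auto
    next
      case False
      then obtain y where y: "y \<in> A" "P y < P x" "f y \<le> f x + 1" "f x \<le> f y + 1"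
        using descent less.prems by blast
      then obtain z where z: "z \<in> A" "P z = 0" "{min (f y) (f z)..max (f y) (f z)} \<subseteq> f ` A"
        using less.hyps by blast
      have "{min (f x) (f z)..max (f x) (f z)} \<subseteq> insert (f x) {min (f y) (f z)..max (f y) (f z)}"
        using y(3,4) by auto
      with z less.prems show ?thesis by blast
    qed
  qed
  show ?thesis
    unfolding continuous_spectrum_def
  proof (intro ballI allI impI)
    fix i j t assume "i \<in> f ` A" "j \<in> f ` A" and t: "i \<le> t \<and> t \<le> j"
    then obtain x y where x: "x \<in> A" "i = f x" and y: "y \<in> A" "j = f y"
      by blast
    obtain z where z: "z \<in> A" "P z = 0" "{min (f x) (f z)..max (f x) (f z)} \<subseteq> f ` A"
      using reach[OF x(1)] by blast
    obtain z' where z': "z' \<in> A" "P z' = 0" "{min (f y) (f z')..max (f y) (f z')} \<subseteq> f ` A"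
      using reach[OF y(1)] by blast
    have "f z = f z'"
      using bottom z(1,2) z'(1,2) by blast
    then show "t \<in> f ` A"
      using t x(2) y(2) z(3) z'(3) by (cases "t \<le> f z") auto
  qed
qed

locale odd_cylinder =
  fixes N k :: nat
  assumes three_le_N: "3 \<le> N" and odd_N: "odd N" and odd_k: "odd k"
begin

definition nxt :: "nat \<Rightarrow> nat" where
  "nxt a = (a + 1) mod N"

definition hor :: "nat \<Rightarrow> nat \<Rightarrow> (nat \<times> nat) set" where
  "hor a b = {(a, b), (nxt a, b)}"

definition ver :: "nat \<Rightarrow> nat \<Rightarrow> (nat \<times> nat) set" where
  "ver a b = {(a, b), (a, Suc b)}"

lemma nxt_less: "nxt a < N"
  using three_le_N unfolding nxt_def by simp

lemma nxt_eq: "a < N \<Longrightarrow> nxt a = (if Suc a = N then 0 else Suc a)"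
  unfolding nxt_def by auto

lemma nxt_neq: "a < N \<Longrightarrow> nxt a \<noteq> a"
  using three_le_N by (simp add: nxt_eq)

lemma nxt_nxt_neq: "a < N \<Longrightarrow> nxt (nxt a) \<noteq> a"
  using three_le_N by (auto simp: nxt_eq nxt_less)

lemma nxt_inj: "a < N \<Longrightarrow> c < N \<Longrightarrow> nxt a = nxt c \<longleftrightarrow> a = c"
  by (auto simp: nxt_eq split: if_splits)

lemma nxt_surj: "c < N \<Longrightarrow> \<exists>a<N. nxt a = c"
  using three_le_N by (cases c) (auto simp: nxt_eq intro: exI[of _ "N - 1"] exI[of _ "c - 1"])

lemma cyl_edges_iff:
  "e \<in> cyl_edges k N \<longleftrightarrow>
     (\<exists>a b. a < N \<and> b \<le> k \<and> e = hor a b) \<or> (\<exists>a b. a < N \<and> b < k \<and> e = ver a b)"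
  unfolding cyl_edges_def hor_def ver_def nxt_def by auto

lemma hor_in_edges: "a < N \<Longrightarrow> b \<le> k \<Longrightarrow> hor a b \<in> cyl_edges k N"
  unfolding cyl_edges_iff by blast

lemma ver_in_edges: "a < N \<Longrightarrow> b < k \<Longrightarrow> ver a b \<in> cyl_edges k N"
  unfolding cyl_edges_iff by blast

lemma hor_neq_ver: "hor a b \<noteq> ver c d"
  unfolding hor_def ver_def by (auto simp: doubleton_eq_iff)

lemma ver_inj: "ver a b = ver c d \<longleftrightarrow> a = c \<and> b = d"
  unfolding ver_def by (auto simp: doubleton_eq_iff)

lemma hor_inj: "a < N \<Longrightarrow> c < N \<Longrightarrow> hor a b = hor c d \<longleftrightarrow> a = c \<and> b = d"
  unfolding hor_def using nxt_nxt_neq by (auto simp: doubleton_eq_iff)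

lemma ver_top_notin_edges: "ver a k \<notin> cyl_edges k N"
  unfolding cyl_edges_iff using hor_neq_ver ver_inj by (metis less_irrefl)

lemma cyl_edges_subset: "e \<in> cyl_edges k N \<Longrightarrow> e \<subseteq> cyl_verts k N"
  unfolding cyl_edges_iff cyl_verts_def hor_def ver_def using nxt_less by auto

sublocale finite_graph "cyl_verts k N" "cyl_edges k N"
proof
  have "cyl_edges k N \<subseteq> Pow (cyl_verts k N)"
    using cyl_edges_subset by blast
  moreover have "finite (cyl_verts k N)"
    by (rule finite_subset[of _ "{..<N} \<times> {..k}"]) (auto simp: cyl_verts_def)
  ultimately show "finite (cyl_edges k N)"
    by (meson finite_Pow_iff finite_subset)
next
  show "e \<in> cyl_edges k N \<Longrightarrow> e \<subseteq> cyl_verts k N" for e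
    by (rule cyl_edges_subset)
  show "e \<in> cyl_edges k N \<Longrightarrow> e \<noteq> {}" for e
    unfolding cyl_edges_iff hor_def ver_def by auto
qed

abbreviation cyl_pm :: "(nat \<times> nat) set set \<Rightarrow> bool" where
  "cyl_pm M \<equiv> perfect_matching (cyl_verts k N) (cyl_edges k N) M"

abbreviation cyl_fn :: "(nat \<times> nat) set set \<Rightarrow> nat" where
  "cyl_fn M \<equiv> forcing_number (cyl_verts k N) (cyl_edges k N) M"

definition hor_ind :: "(nat \<times> nat) set set \<Rightarrow> nat \<Rightarrow> nat \<Rightarrow> int" where
  "hor_ind M a b = of_bool (hor a b \<in> M)"

definition ver_ind :: "(nat \<times> nat) set set \<Rightarrow> nat \<Rightarrow> nat \<Rightarrow> int" where
  "ver_ind M a b = of_bool (ver a b \<in> M)"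

lemma ver_ind_top: "cyl_pm M \<Longrightarrow> ver_ind M a k = 0"
  unfolding ver_ind_def using perfect_matching_subset ver_top_notin_edges by auto

text \<open>Stated at the vertex (nxt a, b), whose left neighbour is (a, b), so that no predecessor
  function on columns is needed.\<close>

lemma vertex_equation:
  assumes pm: "cyl_pm M" and a: "a < N" and b: "b \<le> k"
  shows "hor_ind M a b + hor_ind M (nxt a) b + ver_ind M (nxt a) b
           + (if b = 0 then 0 else ver_ind M (nxt a) (b - 1)) = 1"
proof -
  have "(nxt a, b) \<in> cyl_verts k N"
    using b nxt_less unfolding cyl_verts_def by simp
  then obtain e where e: "e \<in> M" "(nxt a, b) \<in> e"
    using perfect_matching_cover[OF pm] by blast
  have ind: "f \<in> M \<longleftrightarrow> f = e" if "(nxt a, b) \<in> f" for f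
    using perfect_matching_unique[OF pm _ e(1) that e(2)] e(1) by blast
  have inds: "hor_ind M a b = of_bool (hor a b = e)"
    "hor_ind M (nxt a) b = of_bool (hor (nxt a) b = e)"
    "ver_ind M (nxt a) b = of_bool (ver (nxt a) b = e)"
    "b \<noteq> 0 \<Longrightarrow> ver_ind M (nxt a) (b - 1) = of_bool (ver (nxt a) (b - 1) = e)"
    unfolding hor_ind_def ver_ind_def using ind by (simp_all add: hor_def ver_def)
  have "e \<in> cyl_edges k N"
    using e(1) perfect_matching_subset[OF pm] by blast
  then obtain c d where "c < N \<and> e = hor c d \<or> e = ver c d"
    unfolding cyl_edges_iff by blast
  then show ?thesis
  proof
    assume h: "c < N \<and> e = hor c d"
    with e(2) have "d = b" "c = a \<or> c = nxt a"
      using nxt_inj[of c a] a by (auto simp: hor_def)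
    with h have "e = hor a b \<or> e = hor (nxt a) b"
      by blast
    moreover have "hor (nxt a) b \<noteq> hor a b"
      using hor_inj[OF nxt_less a] nxt_neq[OF a] by blast
    ultimately show ?thesis
      using inds by (elim disjE) (simp_all add: hor_neq_ver hor_neq_ver[symmetric])
  next
    assume v: "e = ver c d"
    with e(2) have "c = nxt a" "d = b \<or> Suc d = b"
      by (auto simp: ver_def)
    with v have "e = ver (nxt a) b \<or> b \<noteq> 0 \<and> e = ver (nxt a) (b - 1)"
      by auto
    then show ?thesis
      using inds by (elim disjE conjE) (auto simp: ver_inj hor_neq_ver hor_neq_ver[symmetric])
  qed
qed

definition height :: "(nat \<times> nat) set set \<Rightarrow> nat \<Rightarrow> nat \<Rightarrow> int" where
  "height M a b = (\<Sum>i\<le>b. (-1)^i * hor_ind M a i)"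

lemma height_0: "height M a 0 = hor_ind M a 0"
  unfolding height_def by simp

lemma height_Suc: "height M a (Suc b) = height M a b + (-1)^Suc b * hor_ind M a (Suc b)"
  unfolding height_def by simp

lemma height_adjacent:
  assumes pm: "cyl_pm M" and a: "a < N"
  shows "b \<le> k \<Longrightarrow>
    height M a b + height M (nxt a) b = of_bool (even b) - (-1)^b * ver_ind M (nxt a) b"
proof (induction b)
  case 0
  then show ?case
    using vertex_equation[OF pm a, of 0] by (simp add: height_0)
next
  case (Suc b)
  have "hor_ind M a (Suc b) + hor_ind M (nxt a) (Suc b) + ver_ind M (nxt a) (Suc b)
      + ver_ind M (nxt a) b = 1"
    using vertex_equation[OF pm a Suc.prems] by simp
  moreover have "height M a b + height M (nxt a) b = of_bool (even b) - (-1)^b * ver_ind M (nxt a) b"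
    using Suc by simp
  ultimately show ?case
    by (cases "even b") (simp_all add: height_Suc algebra_simps)
qed

lemma height_top:
  assumes pm: "cyl_pm M" and a: "a < N"
  shows "height M a k = 0"
proof -
  have flip: "height M (nxt c) k = - height M c k" if "c < N" for c
    using height_adjacent[OF pm that, of k] ver_ind_top[OF pm] odd_k by simp
  have alternate: "c < N \<Longrightarrow> height M c k = (-1)^c * height M 0 k" for c
  proof (induction c)
    case (Suc c)
    then show ?case
      using flip[of c] by (simp add: nxt_eq)
  qed simp
  have "nxt (N - 1) = 0"
    using three_le_N by (simp add: nxt_eq)
  then have "height M 0 k = - ((-1)^(N - 1) * height M 0 k)"
    using flip[of "N - 1"] alternate[of "N - 1"] three_le_N by simp
  also have "\<dots> = - height M 0 k"
    using odd_N three_le_N by simp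
  finally show ?thesis
    using alternate[OF a] by simp
qed

lemma hor_ind_cases: "hor_ind M a b = 0 \<or> hor_ind M a b = 1"
  unfolding hor_ind_def by simp

lemma hor_ind_eq_1: "hor_ind M a b = 1 \<longleftrightarrow> hor a b \<in> M"
  unfolding hor_ind_def by simp

lemma ver_ind_eq_1: "ver_ind M a b = 1 \<longleftrightarrow> ver a b \<in> M"
  unfolding ver_ind_def by simp

text \<open>
  Up to the tie-break term, the score is 2 s G(c, b) for the centred height
  G = 2 H - [b even], which changes by \<plusminus>1 between vertically adjacent faces. Breaking ties
  in favour of s (-1)^b = 1 is what makes a maximising face carry two parallel matching edges.
\<close>

definition face_score :: "(nat \<times> nat) set set \<Rightarrow> nat \<Rightarrow> int \<Rightarrow> nat \<Rightarrow> int" where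
  "face_score M c s b =
     2 * s * (2 * height M c b - of_bool (even b)) + of_bool (s * (-1)^b = 1)"

definition maximal_face :: "(nat \<times> nat) set set \<Rightarrow> nat \<Rightarrow> int \<Rightarrow> nat \<Rightarrow> bool" where
  "maximal_face M c s b \<longleftrightarrow> c < N \<and> s \<in> {1, -1} \<and> b < k \<and>
     (\<forall>c' s' b'. c' < N \<longrightarrow> s' \<in> {1, -1} \<longrightarrow> b' < k \<longrightarrow>
        face_score M c' s' b' \<le> face_score M c s b)"

lemma maximal_faceD:
  assumes "maximal_face M c s b"
  shows "c < N" "s \<in> {1, -1}" "b < k"
    and "c' < N \<Longrightarrow> s' \<in> {1, -1} \<Longrightarrow> b' < k \<Longrightarrow> face_score M c' s' b' \<le> face_score M c s b"
  using assms unfolding maximal_face_def by blast+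

lemma maximal_face_exists: "\<exists>c s b. maximal_face M c s b"
proof -
  define F where "F = {..<N} \<times> {1, -1 :: int} \<times> {..<k}"
  define g where "g = (\<lambda>(c, s, b). face_score M c s b)"
  have "(0, 1, 0) \<in> F"
    using three_le_N odd_pos[OF odd_k] unfolding F_def by simp
  then have "finite F" "F \<noteq> {}"
    unfolding F_def by auto
  then obtain x where x: "x \<in> F" "Max (g ` F) = g x"
    by (rule obtains_MAX)
  have x_max: "g y \<le> g x" if "y \<in> F" for y
    using x(2) Max_ge[of "g ` F"] \<open>finite F\<close> that by simp
  obtain c s b where x_eq: "x = (c, s, b)"
    by (cases x)
  have "maximal_face M c s b"
    unfolding maximal_face_def
  proof (intro conjI allI impI)
    show "c < N" "s \<in> {1, -1}" "b < k"
      using x(1) unfolding x_eq F_def by auto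
    fix c' b' :: nat and s' :: int
    assume "c' < N" "s' \<in> {1, -1}" "b' < k"
    then have "(c', s', b') \<in> F"
      unfolding F_def by auto
    then show "face_score M c' s' b' \<le> face_score M c s b"
      using x_max unfolding x_eq g_def by fastforce
  qed
  then show ?thesis
    by blast
qed

lemma maximal_face_pos:
  assumes max: "maximal_face M c s b" and "c0 < N" "b0 < k" "height M c0 b0 \<noteq> 0"
  shows "1 \<le> s * height M c b"
proof -
  define s0 :: int where "s0 = (if height M c0 b0 > 0 then 1 else -1)"
  have "3 \<le> face_score M c0 s0 b0"
    using assms(4) unfolding face_score_def s0_def by (cases "even b0") auto
  also have "\<dots> \<le> face_score M c s b"
    using maximal_faceD(4)[OF max assms(2) _ assms(3)] unfolding s0_def by simp
  finally show ?thesis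
    using maximal_faceD(2)[OF max] unfolding face_score_def by (cases "even b") auto
qed

lemma maximal_face_lower_horizontal:
  assumes max: "maximal_face M c s b" and pos: "1 \<le> s * height M c b"
    and t: "s * (-1)^b = 1"
  shows "hor c b \<in> M"
proof -
  note c = maximal_faceD(1)[OF max] and s = maximal_faceD(2)[OF max]
    and b = maximal_faceD(3)[OF max]
  have s_eq: "(-1)^b = s"
    using t s by (cases "even b") auto
  have "hor_ind M c b = 1"
  proof (cases b)
    case 0
    then show ?thesis
      using pos s_eq hor_ind_cases[of M c 0] by (auto simp: height_0)
  next
    case (Suc b')
    have "face_score M c s b' \<le> face_score M c s b"
      using maximal_faceD(4)[OF max c s] b Suc by simp
    moreover have "height M c b = height M c b' + s * hor_ind M c b"
      using height_Suc[of M c b'] Suc s_eq by metis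
    ultimately show ?thesis
      using s_eq Suc hor_ind_cases[of M c b]
      unfolding face_score_def by (cases "even b") auto
  qed
  then show ?thesis
    by (simp add: hor_ind_eq_1)
qed

lemma maximal_face_upper_horizontal:
  assumes pm: "cyl_pm M" and max: "maximal_face M c s b" and pos: "1 \<le> s * height M c b"
    and t: "s * (-1)^b = 1"
  shows "hor c (Suc b) \<in> M"
proof -
  note c = maximal_faceD(1)[OF max] and s = maximal_faceD(2)[OF max]
    and b = maximal_faceD(3)[OF max]
  have s_eq: "(-1)^b = s"
    using t s by (cases "even b") auto
  have step: "height M c (Suc b) = height M c b - s * hor_ind M c (Suc b)"
    using height_Suc[of M c b] s_eq by simp
  have "hor_ind M c (Suc b) = 1"
  proof (cases "Suc b = k")
    case True
    then show ?thesis
      using step height_top[OF pm c] pos s hor_ind_cases[of M c "Suc b"] by auto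
  next
    case False
    then have "face_score M c s (Suc b) \<le> face_score M c s b"
      using maximal_faceD(4)[OF max c s] b False by simp
    then show ?thesis
      using step s_eq hor_ind_cases[of M c "Suc b"]
      unfolding face_score_def by (cases "even b") auto
  qed
  then show ?thesis
    by (simp add: hor_ind_eq_1)
qed

lemma maximal_face_vertical:
  assumes pm: "cyl_pm M" and max: "maximal_face M c s b" and t: "s * (-1)^b = -1"
    and a: "a < N" and c: "c = a \<or> c = nxt a"
  shows "ver (nxt a) b \<in> M"
proof -
  note s = maximal_faceD(2)[OF max] and b = maximal_faceD(3)[OF max]
  have "face_score M (nxt a) (-s) b \<le> face_score M c s b"
    "face_score M a (-s) b \<le> face_score M c s b"
    using maximal_faceD(4)[OF max _ _ b] a nxt_less s by auto
  then have "face_score M (nxt a) (-s) b \<le> face_score M a s b \<or>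
      face_score M a (-s) b \<le> face_score M (nxt a) s b"
    using c by auto
  moreover have "height M a b + height M (nxt a) b
      = of_bool (even b) - (-1)^b * ver_ind M (nxt a) b"
    using height_adjacent[OF pm a] b by simp
  moreover have "ver_ind M (nxt a) b = 0 \<or> ver_ind M (nxt a) b = 1"
    unfolding ver_ind_def by simp
  ultimately have "ver_ind M (nxt a) b = 1"
    using s t unfolding face_score_def by (cases "even b") auto
  then show ?thesis
    by (simp add: ver_ind_eq_1)
qed

lemma face_edges:
  "{(c, b), (nxt c, b)} = hor c b" "{(nxt c, b), (c, b)} = hor c b"
  "{(c, Suc b), (nxt c, Suc b)} = hor c (Suc b)" "{(nxt c, Suc b), (c, Suc b)} = hor c (Suc b)"
  "{(c, b), (c, Suc b)} = ver c b" "{(c, Suc b), (c, b)} = ver c b"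
  "{(nxt c, b), (nxt c, Suc b)} = ver (nxt c) b" "{(nxt c, Suc b), (nxt c, b)} = ver (nxt c) b"
  unfolding hor_def ver_def by auto

lemma flip_horizontal_pair:
  assumes pm: "cyl_pm M" and c: "c < N" and b: "b < k"
    and pair: "hor c b \<in> M" "hor c (Suc b) \<in> M"
  obtains M' where "cyl_pm M'" "cyl_fn M' \<le> cyl_fn M + 1" "cyl_fn M \<le> cyl_fn M' + 1"
    "\<And>d i. d < N \<Longrightarrow> hor_ind M' d i = hor_ind M d i - of_bool (d = c \<and> (i = b \<or> i = Suc b))"
proof -
  have "distinct [(c, b), (nxt c, b), (nxt c, Suc b), (c, Suc b)]"
    using nxt_neq[OF c] by auto
  then have square:
    "alternating_square (cyl_edges k N) M (c, b) (nxt c, b) (nxt c, Suc b) (c, Suc b)"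
    using pair ver_in_edges[OF c b] ver_in_edges[OF nxt_less b]
    unfolding alternating_square_def face_edges by blast
  have twist_eq: "twist (c, b) (nxt c, b) (nxt c, Suc b) (c, Suc b) M
      = M - {hor c b, hor c (Suc b)} \<union> {ver (nxt c) b, ver c b}"
    unfolding twist_def by (simp add: face_edges)
  show ?thesis
  proof (rule that[OF perfect_matching_twist[OF pm square] forcing_number_twist[OF pm square]])
    fix d i assume "d < N"
    then show "hor_ind (twist (c, b) (nxt c, b) (nxt c, Suc b) (c, Suc b) M) d i
        = hor_ind M d i - of_bool (d = c \<and> (i = b \<or> i = Suc b))"
      using pair hor_inj[OF _ c] unfolding twist_eq hor_ind_def by (auto simp: hor_neq_ver)
  qed
qed

lemma flip_vertical_pair:
  assumes pm: "cyl_pm M" and c: "c < N" and b: "b < k"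
    and pair: "ver c b \<in> M" "ver (nxt c) b \<in> M"
  obtains M' where "cyl_pm M'" "cyl_fn M' \<le> cyl_fn M + 1" "cyl_fn M \<le> cyl_fn M' + 1"
    "\<And>d i. d < N \<Longrightarrow> hor_ind M' d i = hor_ind M d i + of_bool (d = c \<and> (i = b \<or> i = Suc b))"
proof -
  have "distinct [(c, b), (c, Suc b), (nxt c, Suc b), (nxt c, b)]"
    using nxt_neq[OF c] by auto
  then have square:
    "alternating_square (cyl_edges k N) M (c, b) (c, Suc b) (nxt c, Suc b) (nxt c, b)"
    using pair hor_in_edges[OF c] b
    unfolding alternating_square_def face_edges by simp
  have twist_eq: "twist (c, b) (c, Suc b) (nxt c, Suc b) (nxt c, b) M
      = M - {ver c b, ver (nxt c) b} \<union> {hor c (Suc b), hor c b}"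
    unfolding twist_def by (simp add: face_edges)
  have notin: "hor c (Suc b) \<notin> M" "hor c b \<notin> M"
    using twist_new_edges_notin[OF pm square] by (simp_all add: face_edges)
  show ?thesis
  proof (rule that[OF perfect_matching_twist[OF pm square] forcing_number_twist[OF pm square]])
    fix d i assume "d < N"
    then show "hor_ind (twist (c, b) (c, Suc b) (nxt c, Suc b) (nxt c, b) M) d i
        = hor_ind M d i + of_bool (d = c \<and> (i = b \<or> i = Suc b))"
      using notin hor_inj[OF _ c] unfolding twist_eq hor_ind_def by (auto simp: hor_neq_ver)
  qed
qed

definition potential :: "(nat \<times> nat) set set \<Rightarrow> nat" where
  "potential M = (\<Sum>(c, b)\<in>{..<N} \<times> {..<k}. nat \<bar>height M c b\<bar>)"

lemma potential_eq_0_iff: "potential M = 0 \<longleftrightarrow> (\<forall>c<N. \<forall>b<k. height M c b = 0)"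
  unfolding potential_def by (subst sum_eq_0_iff) auto

lemma height_flip:
  assumes "\<And>i. hor_ind M' d i
      = hor_ind M d i - (if d = c \<and> (i = b \<or> i = Suc b) then s * (-1)^b else 0)"
  shows "height M' d j = height M d j - (if d = c \<and> j = b then s else 0)"
proof (induction j)
  case 0
  then show ?case
    using assms[of 0] by (simp add: height_0)
next
  case (Suc j)
  then show ?case
    using assms[of "Suc j"] by (cases "even b") (auto simp: height_Suc)
qed

lemma potential_flip_less:
  assumes c: "c < N" and b: "b < k" and s: "s \<in> {1, -1}" and pos: "1 \<le> s * height M c b"
    and hor: "\<And>d i. d < N \<Longrightarrow> hor_ind M' d i
        = hor_ind M d i - (if d = c \<and> (i = b \<or> i = Suc b) then s * (-1)^b else 0)"
  shows "potential M' < potential M"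
  unfolding potential_def
proof (rule sum_strict_mono_ex1)
  have height': "height M' d j = height M d j - (if d = c \<and> j = b then s else 0)"
    if "d < N" for d j
    using height_flip[OF hor[OF that]] .
  show "\<forall>x\<in>{..<N} \<times> {..<k}. (\<lambda>(c, b). nat \<bar>height M' c b\<bar>) x \<le> (\<lambda>(c, b). nat \<bar>height M c b\<bar>) x"
    using height' s pos by auto
  show "\<exists>x\<in>{..<N} \<times> {..<k}. (\<lambda>(c, b). nat \<bar>height M' c b\<bar>) x < (\<lambda>(c, b). nat \<bar>height M c b\<bar>) x"
    using height'[OF c, of b] c b s pos by (intro bexI[of _ "(c, b)"]) auto
qed simp

definition base_matching :: "(nat \<times> nat) set set" where
  "base_matching = {ver c b | c b. c < N \<and> b < k \<and> even b}"

lemma potential_eq_0_hor_ind: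
  assumes pm: "cyl_pm M" and zero: "potential M = 0" and c: "c < N" and b: "b \<le> k"
  shows "hor_ind M c b = 0"
proof -
  have height: "height M c b' = 0" if "b' \<le> k" for b'
    using zero height_top[OF pm c] c that unfolding potential_eq_0_iff
    by (cases "b' = k") auto
  show ?thesis
  proof (cases b)
    case 0
    then show ?thesis using height[OF b] by (simp add: height_0)
  next
    case (Suc b')
    then show ?thesis using height[OF b] height[of b'] b by (simp add: height_Suc)
  qed
qed

lemma potential_eq_0_ver_ind:
  assumes pm: "cyl_pm M" and zero: "potential M = 0" and c: "c < N" and b: "b \<le> k"
  shows "ver_ind M c b = of_bool (even b)"
proof -
  obtain a where a: "a < N" "nxt a = c"
    using nxt_surj[OF c] by blast
  note no_hor = potential_eq_0_hor_ind[OF pm zero]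
  show ?thesis
    using b
  proof (induction b)
    case 0
    then show ?case
      using vertex_equation[OF pm a(1), of 0] no_hor[OF a(1), of 0] no_hor[OF c, of 0] a(2)
      by simp
  next
    case (Suc b)
    then show ?case
      using vertex_equation[OF pm a(1) Suc.prems] no_hor[OF a(1) Suc.prems]
        no_hor[OF c Suc.prems] a(2) by (cases "even b") simp_all
  qed
qed

lemma potential_eq_0_imp_base:
  assumes pm: "cyl_pm M" and zero: "potential M = 0"
  shows "M = base_matching"
proof (intro equalityI subsetI)
  fix e assume e: "e \<in> M"
  then have "e \<in> cyl_edges k N"
    using perfect_matching_subset[OF pm] by blast
  then show "e \<in> base_matching"
    unfolding cyl_edges_iff
  proof (elim disjE exE conjE)
    fix c b assume "c < N" "b \<le> k" "e = hor c b"
    then show ?thesis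
      using e potential_eq_0_hor_ind[OF pm zero] by (simp add: hor_ind_def)
  next
    fix c b assume "c < N" "b < k" "e = ver c b"
    then show ?thesis
      using e potential_eq_0_ver_ind[OF pm zero, of c b]
      unfolding base_matching_def ver_ind_def by auto
  qed
next
  fix e assume "e \<in> base_matching"
  then obtain c b where "c < N" "b < k" "even b" "e = ver c b"
    unfolding base_matching_def by blast
  then show "e \<in> M"
    using potential_eq_0_ver_ind[OF pm zero, of c b] by (simp add: ver_ind_def)
qed

lemma maximal_face_flip:
  assumes pm: "cyl_pm M" and max: "maximal_face M c s b" and pos: "1 \<le> s * height M c b"
  shows "\<exists>M'. cyl_pm M' \<and> cyl_fn M' \<le> cyl_fn M + 1 \<and> cyl_fn M \<le> cyl_fn M' + 1 \<and>
    (\<forall>d<N. \<forall>i. hor_ind M' d i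
        = hor_ind M d i - (if d = c \<and> (i = b \<or> i = Suc b) then s * (-1)^b else 0))"
proof -
  note c = maximal_faceD(1)[OF max] and s = maximal_faceD(2)[OF max]
    and b = maximal_faceD(3)[OF max]
  show ?thesis
  proof (cases "s * (-1)^b = 1")
    case True
    obtain M' where "cyl_pm M'" "cyl_fn M' \<le> cyl_fn M + 1" "cyl_fn M \<le> cyl_fn M' + 1"
      "\<And>d i. d < N \<Longrightarrow> hor_ind M' d i = hor_ind M d i - of_bool (d = c \<and> (i = b \<or> i = Suc b))"
      using flip_horizontal_pair[OF pm c b] maximal_face_lower_horizontal[OF max pos True]
        maximal_face_upper_horizontal[OF pm max pos True] by blast
    with True show ?thesis
      by auto
  next
    case False
    then have t: "s * (-1)^b = -1"
      using s by (cases "even b") auto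
    obtain a where "a < N" "nxt a = c"
      using nxt_surj[OF c] by blast
    then have "ver c b \<in> M" "ver (nxt c) b \<in> M"
      using maximal_face_vertical[OF pm max t] c by auto
    then obtain M' where "cyl_pm M'" "cyl_fn M' \<le> cyl_fn M + 1" "cyl_fn M \<le> cyl_fn M' + 1"
      "\<And>d i. d < N \<Longrightarrow> hor_ind M' d i = hor_ind M d i + of_bool (d = c \<and> (i = b \<or> i = Suc b))"
      using flip_vertical_pair[OF pm c b] by blast
    with t show ?thesis
      by auto
  qed
qed

lemma exists_flip_lowering_potential:
  assumes pm: "cyl_pm M" and nonzero: "potential M \<noteq> 0"
  shows "\<exists>M'. cyl_pm M' \<and> potential M' < potential M
           \<and> cyl_fn M' \<le> cyl_fn M + 1 \<and> cyl_fn M \<le> cyl_fn M' + 1"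
proof -
  obtain c0 b0 where "c0 < N" "b0 < k" "height M c0 b0 \<noteq> 0"
    using nonzero unfolding potential_eq_0_iff by blast
  moreover obtain c s b where max: "maximal_face M c s b"
    using maximal_face_exists by blast
  ultimately have pos: "1 \<le> s * height M c b"
    using maximal_face_pos by blast
  note c = maximal_faceD(1)[OF max] and s = maximal_faceD(2)[OF max]
    and b = maximal_faceD(3)[OF max]
  show ?thesis
    using maximal_face_flip[OF pm max pos] potential_flip_less[OF c b s pos] by blast
qed

theorem continuous_forcing_spectrum:
  "continuous_spectrum (forcing_spectrum (cyl_verts k N) (cyl_edges k N))"
  unfolding forcing_spectrum_eq_image
proof (rule continuous_spectrum_by_descent[where P = potential])
  show "\<exists>M'\<in>{M. cyl_pm M}. potential M' < potential M \<and> cyl_fn M' \<le> cyl_fn M + 1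
          \<and> cyl_fn M \<le> cyl_fn M' + 1"
    if "M \<in> {M. cyl_pm M}" "potential M \<noteq> 0" for M
    using exists_flip_lowering_potential that by blast
  show "cyl_fn M = cyl_fn M'"
    if "M \<in> {M. cyl_pm M}" "M' \<in> {M. cyl_pm M}" "potential M = 0" "potential M' = 0" for M M'
    using potential_eq_0_imp_base that by (metis mem_Collect_eq)
qed

end

theorem corollary5p5:
  fixes m n :: nat
  assumes "n \<ge> 1" and "m \<ge> 1"
  shows "continuous_spectrum
           (forcing_spectrum (cyl_verts (2*m - 1) (2*n + 1)) (cyl_edges (2*m - 1) (2*n + 1)))"
proof -
  interpret odd_cylinder "2*n + 1" "2*m - 1"
    by unfold_locales (use assms in auto)
  show ?thesis
    by (rule continuous_forcing_spectrum)
qed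

end
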